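(* If a $3$-connected graph has a mixed bicycle, then it is $K_{2,3}$-based.
   Context: A mixed bicycle in a graph is a pair $(Q_o,Q_e)$ of vertex-disjoint cycles where $Q_o$ has odd length and $Q_e$ has even length at least four. To bisubdivide an edge is to subdivide it by inserting an even number of new vertices; a bisubdivision of $K$ is obtained by bisubdividing some (possibly none) of its edges. A graph is $K_{2,3}$-based if it contains a subgraph that is a bisubdivision of $K_{2,3}$. *)

theory Defs
  imports Main
begin

definition graph :: "'a set \<Rightarrow> 'a set set \<Rightarrow> bool" where
  "graph V E \<longleftrightarrow> finite V \<and> (\<forall>e\<in>E. \<exists>u v. e = {u, v} \<and> u \<noteq> v \<and> u \<in> V \<and> v \<in> V)"

definition is_path :: "'a set \<Rightarrow> 'a set set \<Rightarrow> 'a list \<Rightarrow> bool" where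
  "is_path V E p \<longleftrightarrow> p \<noteq> [] \<and> distinct p \<and> set p \<subseteq> V \<and>
     (\<forall>i. Suc i < length p \<longrightarrow> {p ! i, p ! Suc i} \<in> E)"

definition path_len :: "'a list \<Rightarrow> nat" where
  "path_len p = length p - 1"

definition internal :: "'a list \<Rightarrow> 'a set" where
  "internal p = set (butlast (tl p))"

definition connected_on :: "'a set \<Rightarrow> 'a set set \<Rightarrow> 'a set \<Rightarrow> bool" where
  "connected_on V E W \<longleftrightarrow> (\<forall>u\<in>W. \<forall>v\<in>W. \<exists>p. is_path V E p \<and> set p \<subseteq> W \<and> hd p = u \<and> last p = v)"

definition three_connected :: "'a set \<Rightarrow> 'a set set \<Rightarrow> bool" where
  "three_connected V E \<longleftrightarrow> card V > 3 \<and>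
     (\<forall>S. S \<subseteq> V \<and> card S < 3 \<longrightarrow> connected_on V E (V - S))"

text \<open>A cycle is given by a list [v0,...,v(k-1)] of k \<ge> 3 distinct vertices with
  consecutive vertices adjacent and v(k-1) adjacent to v0; its length is k.\<close>
definition is_cycle :: "'a set \<Rightarrow> 'a set set \<Rightarrow> 'a list \<Rightarrow> bool" where
  "is_cycle V E c \<longleftrightarrow> length c \<ge> 3 \<and> is_path V E c \<and> {last c, hd c} \<in> E"

definition mixed_bicycle :: "'a set \<Rightarrow> 'a set set \<Rightarrow> 'a list \<Rightarrow> 'a list \<Rightarrow> bool" where
  "mixed_bicycle V E Qo Qe \<longleftrightarrow> is_cycle V E Qo \<and> is_cycle V E Qe \<and>
     set Qo \<inter> set Qe = {} \<and> odd (length Qo) \<and> even (length Qe) \<and> length Qe \<ge> 4"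

definition has_mixed_bicycle :: "'a set \<Rightarrow> 'a set set \<Rightarrow> bool" where
  "has_mixed_bicycle V E \<longleftrightarrow> (\<exists>Qo Qe. mixed_bicycle V E Qo Qe)"

text \<open>G contains a subgraph that is a bisubdivision of the graph K = (VK, EK):
  the vertices of K are mapped injectively (f) to vertices of G, and every edge {u,v}
  of K is replaced by a path P e of G joining f u and f v of odd length
  (i.e. the edge is subdivided by an even number of new vertices); the new
  (internal) vertices of distinct paths are disjoint and avoid f ` VK.\<close>
definition contains_bisubdivision ::
  "'a set \<Rightarrow> 'a set set \<Rightarrow> 'b set \<Rightarrow> 'b set set \<Rightarrow> bool" where
  "contains_bisubdivision V E VK EK \<longleftrightarrow>
     (\<exists>f P. inj_on f VK \<and> f ` VK \<subseteq> V \<and>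
        (\<forall>e\<in>EK. is_path V E (P e) \<and> {hd (P e), last (P e)} = f ` e \<and> odd (path_len (P e))
                 \<and> internal (P e) \<inter> f ` VK = {}) \<and>
        (\<forall>e\<in>EK. \<forall>e'\<in>EK. e \<noteq> e' \<longrightarrow> internal (P e) \<inter> internal (P e') = {}))"

definition K23_V :: "nat set" where "K23_V = {0,1,2,3,4}"
definition K23_E :: "nat set set" where
  "K23_E = {{i, j} | i j. i \<in> {0,1} \<and> j \<in> {2,3,4}}"

definition K23_based :: "'a set \<Rightarrow> 'a set set \<Rightarrow> bool" where
  "K23_based V E \<longleftrightarrow> contains_bisubdivision V E K23_V K23_E"

end

theory Submission
  imports Defs
begin

(*
  By Menger's theorem, 3-connectivity yields three disjoint paths from the odd cycle Qo to the
  even cycle Qe, each meeting the two cycles only in its end vertices.  Two of the three ends on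
  Qe, say u and w, lie at even distance along Qe, so Qe splits into two u-w paths of even length.
  The linking paths ending in u and w, joined by an arc of Qo between their other ends, form a
  third u-w path; since Qo is odd, one of its two arcs makes this path even as well.  Three
  internally disjoint u-w paths of even length form a bisubdivision of K_{2,3}: each of them is
  an edge from u to a middle vertex followed by a path of odd length to w.
*)

section \<open>Walks\<close>

lemma set_butlast_last: "xs \<noteq> [] \<Longrightarrow> set xs = insert (last xs) (set (butlast xs))"
  by (metis append_butlast_last_id insert_is_Un list.set(1,2) set_append sup_commute)

lemma distinct_last_notin_butlast: "distinct xs \<Longrightarrow> xs \<noteq> [] \<Longrightarrow> last xs \<notin> set (butlast xs)"
  by (metis append_butlast_last_id distinct_append disjoint_iff list.set_intros(1))

definition walk :: "'a set \<Rightarrow> 'a set set \<Rightarrow> 'a list \<Rightarrow> bool" where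
  "walk V E w \<longleftrightarrow> w \<noteq> [] \<and> set w \<subseteq> V \<and> successively (\<lambda>x y. {x, y} \<in> E) w"

lemma is_path_iff_walk: "is_path V E p \<longleftrightarrow> walk V E p \<and> distinct p"
  unfolding is_path_def walk_def successively_conv_nth by blast

lemma walk_rev [simp]: "walk V E (rev w) \<longleftrightarrow> walk V E w"
  by (simp add: walk_def insert_commute)

lemma is_path_rev [simp]: "is_path V E (rev p) \<longleftrightarrow> is_path V E p"
  by (simp add: is_path_iff_walk)

lemma walk_mono: "walk V E w \<Longrightarrow> E \<subseteq> E' \<Longrightarrow> walk V E' w"
  unfolding walk_def by (auto elim: successively_mono)

lemma walk_take_drop:
  assumes "walk V E w"
  shows "0 < n \<Longrightarrow> walk V E (take n w)" "n < length w \<Longrightarrow> walk V E (drop n w)"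
proof -
  have "successively (\<lambda>x y. {x, y} \<in> E) (take n w @ drop n w)"
    using assms by (simp add: walk_def)
  then have "successively (\<lambda>x y. {x, y} \<in> E) (take n w)" "successively (\<lambda>x y. {x, y} \<in> E) (drop n w)"
    by (simp_all only: successively_append_iff)
  then show "0 < n \<Longrightarrow> walk V E (take n w)" "n < length w \<Longrightarrow> walk V E (drop n w)"
    using assms set_take_subset[of n w] set_drop_subset[of n w] by (auto simp: walk_def)
qed

lemma walk_append:
  "walk V E xs \<Longrightarrow> walk V E ys \<Longrightarrow> {last xs, hd ys} \<in> E \<Longrightarrow> walk V E (xs @ ys)"
  unfolding walk_def by (simp add: successively_append_iff)

lemma walk_no_edges: "walk V {} w \<Longrightarrow> w = [hd w]"
  unfolding walk_def by (cases w rule: remdups_adj.cases) auto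

definition glue :: "'a list \<Rightarrow> 'a list \<Rightarrow> 'a list" where
  "glue xs ys = xs @ tl ys"

lemma glue_not_Nil [simp]: "xs \<noteq> [] \<Longrightarrow> glue xs ys \<noteq> []"
  by (simp add: glue_def)

lemma glue_simps [simp]:
  assumes "xs \<noteq> []" "ys \<noteq> []" "last xs = hd ys"
  shows "hd (glue xs ys) = hd xs" "last (glue xs ys) = last ys"
    "set (glue xs ys) = set xs \<union> set ys" "path_len (glue xs ys) = path_len xs + path_len ys"
proof -
  obtain y zs where ys: "ys = y # zs" using assms(2) by (cases ys) auto
  with assms show "hd (glue xs ys) = hd xs" "last (glue xs ys) = last ys"
    "set (glue xs ys) = set xs \<union> set ys"
    by (auto simp: glue_def)
  from ys assms(1) show "path_len (glue xs ys) = path_len xs + path_len ys"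
    by (cases xs) (auto simp: glue_def path_len_def)
qed

lemma walk_glue: "walk V E xs \<Longrightarrow> walk V E ys \<Longrightarrow> last xs = hd ys \<Longrightarrow> walk V E (glue xs ys)"
  unfolding walk_def glue_def by (cases ys; cases "tl ys") (auto simp: successively_append_iff)

lemma is_path_glue:
  assumes "is_path V E xs" "is_path V E ys" "last xs = hd ys" "set xs \<inter> set ys \<subseteq> {hd ys}"
  shows "is_path V E (glue xs ys)"
  using assms walk_glue[of V E xs ys] unfolding is_path_iff_walk glue_def
  by (cases ys) (auto simp: walk_def)

lemma not_successively_split:
  "\<not> successively Q w \<Longrightarrow>
     \<exists>w1 w2. w = w1 @ w2 \<and> w1 \<noteq> [] \<and> w2 \<noteq> [] \<and> \<not> Q (last w1) (hd w2) \<and> successively Q w1"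
proof (induction Q w rule: successively.induct)
  case (3 Q x y xs)
  show ?case
  proof (cases "Q x y")
    case True
    with 3 obtain w1 w2 where "y # xs = w1 @ w2" "w1 \<noteq> []" "w2 \<noteq> []"
        "\<not> Q (last w1) (hd w2)" "successively Q w1" by auto
    with True show ?thesis by (intro exI[of _ "x # w1"] exI[of _ w2]) (auto simp: Cons_eq_append_conv successively_Cons)
  next
    case False
    then show ?thesis by (intro exI[of _ "[x]"] exI[of _ "y # xs"]) auto
  qed
qed auto

lemma walk_split_at_edge:
  assumes "walk V E w" "\<not> walk V (E - {e}) w"
  obtains w1 w2 where "w = w1 @ w2" "walk V (E - {e}) w1" "walk V E w2" "{last w1, hd w2} = e"
proof -
  have "\<not> successively (\<lambda>x y. {x, y} \<in> E - {e}) w"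
    using assms unfolding walk_def by auto
  then obtain w1 w2 where w: "w = w1 @ w2" "w1 \<noteq> []" "w2 \<noteq> []"
      "{last w1, hd w2} \<notin> E - {e}" "successively (\<lambda>x y. {x, y} \<in> E - {e}) w1"
    using not_successively_split by blast
  have "walk V (E - {e}) w1" "walk V E w2" "{last w1, hd w2} \<in> E"
    using assms(1) w unfolding walk_def by (auto simp: successively_append_iff)
  with w(1,4) show ?thesis
    using that by blast
qed

section \<open>Menger's theorem\<close>

lemma graph_edge_subset: "graph V E \<Longrightarrow> e \<in> E \<Longrightarrow> e \<subseteq> V"
  unfolding graph_def by auto

text \<open>Separation is expressed with walks rather than paths because walks can be glued freely.\<close>

definition separates :: "'a set \<Rightarrow> 'a set set \<Rightarrow> 'a set \<Rightarrow> 'a set \<Rightarrow> 'a set \<Rightarrow> bool" where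
  "separates V E A B S \<longleftrightarrow> (\<forall>w. walk V E w \<longrightarrow> hd w \<in> A \<longrightarrow> last w \<in> B \<longrightarrow> set w \<inter> S \<noteq> {})"

definition AB_path :: "'a set \<Rightarrow> 'a set set \<Rightarrow> 'a set \<Rightarrow> 'a set \<Rightarrow> 'a list \<Rightarrow> bool" where
  "AB_path V E A B p \<longleftrightarrow> is_path V E p \<and> set p \<inter> A = {hd p} \<and> set p \<inter> B = {last p}"

definition linkage :: "'a set \<Rightarrow> 'a set set \<Rightarrow> 'a set \<Rightarrow> 'a set \<Rightarrow> nat \<Rightarrow> 'a list set \<Rightarrow> bool" where
  "linkage V E A B k P \<longleftrightarrow> finite P \<and> card P = k \<and> (\<forall>p\<in>P. AB_path V E A B p) \<and>
     pairwise (\<lambda>p q. set p \<inter> set q = {}) P"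

definition reach_avoiding :: "'a set \<Rightarrow> 'a set set \<Rightarrow> 'a set \<Rightarrow> 'a set \<Rightarrow> 'a set" where
  "reach_avoiding V E S A = {v. \<exists>w. walk V E w \<and> hd w \<in> A \<and> last w = v \<and> set w \<inter> S = {}}"

lemma reach_avoidingE:
  assumes "v \<in> reach_avoiding V E S A"
  obtains w where "walk V E w" "hd w \<in> A" "last w = v" "set w \<inter> S = {}"
  using assms unfolding reach_avoiding_def by blast

lemma separates_sym: "separates V E A B S \<longleftrightarrow> separates V E B A S"
proof -
  have "separates V E B A S" if "separates V E A B S" for A B
    unfolding separates_def
  proof (intro allI impI)
    fix w assume w: "walk V E w" "hd w \<in> B" "last w \<in> A"
    then have "w \<noteq> []" by (simp add: walk_def)
    with w that show "set w \<inter> S \<noteq> {}"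
      unfolding separates_def by (metis walk_rev hd_rev last_rev set_rev)
  qed
  then show ?thesis by blast
qed

lemma AB_path_nonempty: "AB_path V E A B p \<Longrightarrow> p \<noteq> []"
  unfolding AB_path_def is_path_def by simp

lemma AB_path_last: "AB_path V E A B p \<Longrightarrow> v \<in> set p \<Longrightarrow> v \<in> B \<Longrightarrow> v = last p"
  unfolding AB_path_def by blast

lemma linkage_mono: "linkage V E A B k P \<Longrightarrow> E \<subseteq> E' \<Longrightarrow> linkage V E' A B k P"
  unfolding linkage_def AB_path_def is_path_iff_walk using walk_mono by blast

lemma linkage_image:
  assumes "finite I" "card I = k" "\<And>i. i \<in> I \<Longrightarrow> AB_path V E A B (F i)"
    and "\<And>i j. i \<in> I \<Longrightarrow> j \<in> I \<Longrightarrow> i \<noteq> j \<Longrightarrow> set (F i) \<inter> set (F j) = {}"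
  shows "linkage V E A B k (F ` I)"
proof -
  have "inj_on F I"
    by (rule inj_onI) (metis assms(3,4) AB_path_nonempty inf.idem set_empty)
  then show ?thesis
    using assms unfolding linkage_def pairwise_def by (auto simp: card_image)
qed

lemma linkage_inj_last: "linkage V E A B k P \<Longrightarrow> inj_on last P"
  unfolding linkage_def pairwise_def inj_on_def
  by (metis AB_path_nonempty disjoint_iff last_in_set)

lemma linkage_path_to:
  assumes "linkage V E A B k P" "finite B" "card B = k"
  obtains f where "\<And>b. b \<in> B \<Longrightarrow> f b \<in> P \<and> last (f b) = b"
proof -
  have "last ` P \<subseteq> B"
    using assms(1) unfolding linkage_def AB_path_def by auto
  with linkage_inj_last[OF assms(1)] assms have "last ` P = B"
    by (metis card_image card_subset_eq linkage_def)
  then have "\<forall>b\<in>B. \<exists>p. p \<in> P \<and> last p = b" by force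
  with that show ?thesis by (metis (mono_tags))
qed

lemma menger_no_edges:
  assumes "finite V" "\<forall>S\<subseteq>V. separates V {} A B S \<longrightarrow> k \<le> card S"
  shows "\<exists>P. linkage V {} A B k P"
proof -
  have "separates V {} A B (A \<inter> B \<inter> V)"
    unfolding separates_def
  proof (intro allI impI)
    fix w assume w: "walk V {} w" "hd w \<in> A" "last w \<in> B"
    then have "w = [hd w]" "hd w \<in> V"
      using walk_no_edges[OF w(1)] by (auto simp: walk_def)
    with w show "set w \<inter> (A \<inter> B \<inter> V) \<noteq> {}" by (metis IntI empty_iff last.simps list.set_intros(1))
  qed
  with assms obtain T where T: "T \<subseteq> A \<inter> B \<inter> V" "card T = k"
    by (meson inf_le2 obtain_subset_with_card_n)
  have "linkage V {} A B k ((\<lambda>v. [v]) ` T)"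
    by (rule linkage_image) (use T assms(1) finite_subset in \<open>auto simp: AB_path_def is_path_def\<close>)
  then show ?thesis by blast
qed

lemma walk_leaving_subgraph:
  assumes "walk V E w" "\<not> walk V (E - {e}) w" "hd w \<in> A" "set w \<inter> S = {}"
  shows "\<exists>a\<in>e. a \<in> reach_avoiding V (E - {e}) S A"
proof -
  obtain w1 w2 where w: "w = w1 @ w2" "walk V (E - {e}) w1" "{last w1, hd w2} = e"
    using walk_split_at_edge[OF assms(1,2)] by metis
  then have "w1 \<noteq> []" by (simp add: walk_def)
  with w assms(3,4) have "last w1 \<in> reach_avoiding V (E - {e}) S A"
    unfolding reach_avoiding_def by auto
  with w(3) show ?thesis by blast
qed

lemma reach_avoiding_disjoint:
  assumes "separates V E A B S"
  shows "reach_avoiding V E S A \<inter> reach_avoiding V E S B = {}"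
proof (rule ccontr)
  assume "reach_avoiding V E S A \<inter> reach_avoiding V E S B \<noteq> {}"
  then obtain v where "v \<in> reach_avoiding V E S A" "v \<in> reach_avoiding V E S B" by blast
  then obtain w1 w2 where w: "walk V E w1" "hd w1 \<in> A" "set w1 \<inter> S = {}"
      "walk V E w2" "hd w2 \<in> B" "set w2 \<inter> S = {}" "last w1 = last w2"
    by (metis reach_avoidingE)
  have ne: "w1 \<noteq> []" "rev w2 \<noteq> []" "last w1 = hd (rev w2)"
    using w by (auto simp: walk_def hd_rev)
  have "walk V E (glue w1 (rev w2))"
    using w(1,4) ne(3) by (simp add: walk_glue)
  moreover have "hd (glue w1 (rev w2)) \<in> A" "last (glue w1 (rev w2)) \<in> B"
      "set (glue w1 (rev w2)) \<inter> S = {}"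
    using w ne by (auto simp: last_rev)
  ultimately show False using assms unfolding separates_def by blast
qed

lemma reach_avoiding_disjoint_target:
  "separates V E A B S \<Longrightarrow> B \<inter> reach_avoiding V E S A = {}"
  unfolding separates_def reach_avoiding_def by blast

lemma reach_avoiding_disjoint_separator: "S \<inter> reach_avoiding V E S A = {}"
  unfolding reach_avoiding_def walk_def by (auto dest: last_in_set)

lemma separator_edge_sides:
  assumes "graph V E" "e \<in> E" "separates V (E - {e}) A B S" "\<not> separates V E A B S"
  obtains a b where "e = {a, b}" "a \<in> reach_avoiding V (E - {e}) S A"
    "b \<in> reach_avoiding V (E - {e}) S B"
proof -
  obtain w where w: "walk V E w" "hd w \<in> A" "last w \<in> B" "set w \<inter> S = {}"
    using assms(4) unfolding separates_def by blast
  then have ne: "w \<noteq> []" and "\<not> walk V (E - {e}) w"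
    using assms(3) unfolding separates_def walk_def by auto
  then obtain a b where ab: "a \<in> e" "a \<in> reach_avoiding V (E - {e}) S A"
      "b \<in> e" "b \<in> reach_avoiding V (E - {e}) S B"
    using walk_leaving_subgraph[of V E w e A S] walk_leaving_subgraph[of V E "rev w" e B S] w
    by (auto simp: hd_rev)
  then have "a \<noteq> b" using reach_avoiding_disjoint[OF assms(3)] by blast
  moreover obtain x y where "e = {x, y}" "x \<noteq> y" using assms(1,2) unfolding graph_def by blast
  ultimately have "e = {a, b}" using ab by blast
  with ab that show ?thesis by blast
qed

lemma separates_insert_endpoint:
  assumes "separates V (E - {e}) A B S" "c \<in> e"
  shows "separates V E A B (insert c S)"
  unfolding separates_def
proof (intro allI impI)
  fix w assume w: "walk V E w" "hd w \<in> A" "last w \<in> B"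
  show "set w \<inter> insert c S \<noteq> {}"
  proof (cases "walk V (E - {e}) w")
    case True
    with w assms(1) show ?thesis unfolding separates_def by blast
  next
    case False
    then obtain w1 w2 where "w = w1 @ w2" "walk V E w2" "walk V (E - {e}) w1" "{last w1, hd w2} = e"
      using walk_split_at_edge[OF w(1)] by metis
    then have "e \<subseteq> set w" by (auto simp: walk_def)
    with assms(2) show ?thesis by blast
  qed
qed

lemma walk_first_hit:
  assumes "walk V E w" "set w \<inter> X \<noteq> {}"
  obtains w1 where "walk V E w1" "hd w1 = hd w" "last w1 \<in> X" "set (butlast w1) \<inter> X = {}"
    "set w1 \<subseteq> set w"
proof -
  have "\<exists>x\<in>set w. x \<in> X" using assms(2) by blast
  then obtain ys x zs where w: "w = ys @ x # zs" "x \<in> X" "\<forall>y\<in>set ys. y \<notin> X"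
    by (rule split_list_first_propE)
  then have "ys @ [x] = take (Suc (length ys)) w" by simp
  then have "walk V E (ys @ [x])" using walk_take_drop(1)[OF assms(1), of "Suc (length ys)"] by simp
  moreover have "hd (ys @ [x]) = hd w" "set (ys @ [x]) \<subseteq> set w" using w(1) by (auto simp: hd_append)
  ultimately show ?thesis using that w(2,3) by (metis butlast_snoc disjoint_iff last_snoc)
qed

lemma separates_through_endpoint:
  assumes sep: "separates V (E - {{a, b}}) A B S" and sep_a: "separates V E A B (insert a S)"
    and b: "b \<in> reach_avoiding V (E - {{a, b}}) S B"
    and Z: "separates V (E - {{a, b}}) A (insert a S) Z"
  shows "separates V E A B Z"
  unfolding separates_def
proof (intro allI impI notI)
  fix w assume w: "walk V E w" "hd w \<in> A" "last w \<in> B" "set w \<inter> Z = {}"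
  then have "set w \<inter> insert a S \<noteq> {}" using sep_a unfolding separates_def by blast
  then obtain w1 where w1: "walk V E w1" "hd w1 = hd w" "last w1 \<in> insert a S"
      "set (butlast w1) \<inter> insert a S = {}" "set w1 \<subseteq> set w"
    by (rule walk_first_hit[OF w(1)])
  show False
  proof (cases "walk V (E - {{a, b}}) w1")
    case True
    moreover have "hd w1 \<in> A" "set w1 \<inter> Z = {}" using w w1 by auto
    ultimately show False using Z w1(3) unfolding separates_def by blast
  next
    case False
    obtain u1 u2 where u: "w1 = u1 @ u2" "walk V (E - {{a, b}}) u1" "walk V E u2"
        "{last u1, hd u2} = {a, b}"
      by (rule walk_split_at_edge[OF w1(1) False])
    then have ne: "u1 \<noteq> []" "u2 \<noteq> []" by (auto simp: walk_def)
    with u(1) have "butlast w1 = u1 @ butlast u2" by (simp add: butlast_append)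
    then have u1: "set u1 \<inter> insert a S = {}" using w1(4) by auto
    with ne(1) u(4) have "last u1 = b" by (metis disjoint_iff doubleton_eq_iff insertI1 last_in_set)
    obtain wb where wb: "walk V (E - {{a, b}}) wb" "hd wb \<in> B" "last wb = b" "set wb \<inter> S = {}"
      using b by (rule reach_avoidingE)
    have wb': "walk V (E - {{a, b}}) (rev wb)" "rev wb \<noteq> []" "last u1 = hd (rev wb)"
      using wb \<open>last u1 = b\<close> by (simp_all add: hd_rev walk_def[of _ _ wb])
    let ?v = "glue u1 (rev wb)"
    have "walk V (E - {{a, b}}) ?v" using walk_glue[OF u(2) wb'(1,3)] .
    moreover have "hd ?v \<in> A" using ne(1) wb' u(1) w1(2) w(2) by simp
    moreover have "last ?v \<in> B" using ne(1) wb wb' by (simp add: last_rev)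
    moreover have "set ?v \<inter> S = {}" using ne(1) wb wb' u1 by auto
    ultimately show False using sep unfolding separates_def by blast
  qed
qed

lemma linkage_butlast_reach_avoiding:
  assumes "linkage V E A (insert a S) k P" "p \<in> P"
  shows "set (butlast p) \<subseteq> reach_avoiding V E S A"
proof
  fix v assume v: "v \<in> set (butlast p)"
  have p: "AB_path V E A (insert a S) p" using assms unfolding linkage_def by blast
  then have "p \<noteq> []" "distinct p" "walk V E p" by (auto simp: AB_path_def is_path_iff_walk)
  then have "last p \<notin> set (butlast p)" by (simp add: distinct_last_notin_butlast)
  moreover have "set (butlast p) \<subseteq> set p" by (meson in_set_butlastD subsetI)
  ultimately have avoid: "set (butlast p) \<inter> S = {}"
    using AB_path_last[OF p] by blast
  obtain i where i: "i < length (butlast p)" "v = butlast p ! i"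
    using v by (metis in_set_conv_nth)
  let ?w = "take (Suc i) (butlast p)"
  have "?w = take (Suc i) p" using i by (simp add: take_butlast)
  then have "walk V E ?w" "hd ?w = hd p"
    using walk_take_drop(1)[OF \<open>walk V E p\<close>] \<open>p \<noteq> []\<close> by (auto simp: hd_conv_nth)
  moreover have "last ?w = v" using i by (simp add: take_Suc_conv_app_nth)
  moreover have "set ?w \<inter> S = {}" using avoid set_take_subset[of "Suc i" "butlast p"] by blast
  moreover have "hd p \<in> A" using p unfolding AB_path_def by blast
  ultimately show "v \<in> reach_avoiding V E S A" unfolding reach_avoiding_def by auto
qed

lemma linkage_extend_edge:
  assumes P: "linkage V E A (insert a S) k P" and R: "\<forall>p\<in>P. set (butlast p) \<subseteq> R"
    and "a \<in> R" "a \<notin> S" "b \<notin> R" "b \<notin> S" "b \<notin> A" "b \<in> V" "{a, b} \<in> E"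
  shows "\<exists>P'. linkage V E A (insert b S) k P' \<and> (\<forall>p\<in>P'. set (butlast p) \<subseteq> R)"
proof -
  define F where "F p = (if last p = a then p @ [b] else p)" for p
  have path: "AB_path V E A (insert a S) p" and ne: "p \<noteq> []" if "p \<in> P" for p
    using P that AB_path_nonempty unfolding linkage_def by blast+
  have sub: "set p \<subseteq> insert (last p) R" if "p \<in> P" for p
    using R that set_butlast_last[OF ne[OF that]] by auto
  have last: "last p \<in> insert a S" if "p \<in> P" for p
    using path[OF that] unfolding AB_path_def by blast
  have b_notin: "b \<notin> set p" if "p \<in> P" for p
    using sub[OF that] last[OF that] assms(3-6) by blast
  have F_path: "AB_path V E A (insert b S) (F p)" if p: "p \<in> P" for p
  proof (cases "last p = a")
    case True
    have "walk V E (p @ [b])"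
      using path[OF p] assms(8,9) True
      by (intro walk_append) (auto simp: AB_path_def is_path_iff_walk walk_def)
    moreover have "distinct (p @ [b])" using path[OF p] b_notin[OF p] by (simp add: AB_path_def is_path_def)
    moreover have "set p \<inter> S = {}" using AB_path_last[OF path[OF p]] True assms(4) by blast
    ultimately show ?thesis
      using path[OF p] ne[OF p] True assms(7) by (auto simp: F_def AB_path_def is_path_iff_walk)
  next
    case False
    then have "set p \<inter> insert b S = {last p}"
      using path[OF p] b_notin[OF p] last[OF p] unfolding AB_path_def by auto
    with False path[OF p] show ?thesis by (simp add: F_def AB_path_def)
  qed
  have F_disj: "set (F p) \<inter> set (F q) = {}" if "p \<in> P" "q \<in> P" "p \<noteq> q" for p q
  proof -
    have "set p \<inter> set q = {}" using P that unfolding linkage_def pairwise_def by blast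
    moreover from this have "\<not> (last p = a \<and> last q = a)"
      using ne that(1,2) by (metis disjoint_iff last_in_set)
    ultimately show ?thesis using b_notin that(1,2) by (auto simp: F_def)
  qed
  have F_butlast: "set (butlast (F p)) \<subseteq> R" if "p \<in> P" for p
    using R sub[OF that] assms(3) that by (auto simp: F_def)
  have "linkage V E A (insert b S) k (F ` P)"
    using P F_path F_disj by (intro linkage_image) (auto simp: linkage_def)
  with F_butlast show ?thesis by blast
qed

lemma AB_path_glue:
  assumes p: "AB_path V E A Y p" and q: "AB_path V E B Y q" and y: "last p = last q"
    and "set (butlast p) \<inter> set (butlast q) = {}" "set (butlast q) \<inter> A = {}" "set (butlast p) \<inter> B = {}"
  shows "AB_path V E A B (glue p (rev q))"
proof -
  have ne: "p \<noteq> []" "q \<noteq> []" using p q AB_path_nonempty by blast+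
  have "distinct p" "distinct q" using p q by (auto simp: AB_path_def is_path_def)
  then have "last p \<notin> set (butlast p)" "last q \<notin> set (butlast q)"
    using ne distinct_last_notin_butlast by blast+
  moreover have sp: "set p = insert (last p) (set (butlast p))" and sq: "set q = insert (last p) (set (butlast q))"
    using ne y set_butlast_last by fastforce+
  ultimately have meet: "set p \<inter> set (rev q) \<subseteq> {hd (rev q)}"
    using assms(4) y ne by (auto simp: hd_rev)
  have ends: "last p = hd (rev q)" "rev q \<noteq> []" using y ne by (auto simp: hd_rev)
  have "is_path V E (glue p (rev q))"
    using p q meet ends(1) by (intro is_path_glue) (auto simp: AB_path_def)
  moreover have "set p \<inter> A = {hd p}" "set q \<inter> B = {hd q}"
    using p q unfolding AB_path_def by simp_all
  ultimately show ?thesis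
    using ne ends sp sq assms(5,6) unfolding AB_path_def by (auto simp: last_rev)
qed

lemma linkage_glue:
  assumes P: "linkage V E A Y k P" and Q: "linkage V E B Y k Q" and Y: "finite Y" "card Y = k"
    and RA: "\<forall>p\<in>P. set (butlast p) \<subseteq> RA" and RB: "\<forall>q\<in>Q. set (butlast q) \<subseteq> RB"
    and disj: "RA \<inter> RB = {}" "A \<inter> RB = {}" "B \<inter> RA = {}"
  shows "\<exists>R. linkage V E A B k R"
proof -
  obtain fp where fp: "\<And>y. y \<in> Y \<Longrightarrow> fp y \<in> P \<and> last (fp y) = y"
    using linkage_path_to[OF P Y] by blast
  obtain fq where fq: "\<And>y. y \<in> Y \<Longrightarrow> fq y \<in> Q \<and> last (fq y) = y"
    using linkage_path_to[OF Q Y] by blast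
  have paths: "AB_path V E A Y (fp y)" "AB_path V E B Y (fq y)" if "y \<in> Y" for y
    using fp[OF that] fq[OF that] P Q unfolding linkage_def by blast+
  have set_fp: "set (fp y) \<subseteq> insert y RA" and set_fq: "set (fq y) \<subseteq> insert y RB" if "y \<in> Y" for y
    using set_butlast_last[OF AB_path_nonempty[OF paths(1)[OF that]]]
      set_butlast_last[OF AB_path_nonempty[OF paths(2)[OF that]]] fp[OF that] fq[OF that] RA RB
    by auto
  have "linkage V E A B k ((\<lambda>y. glue (fp y) (rev (fq y))) ` Y)"
  proof (rule linkage_image)
    show "finite Y" "card Y = k" using Y by simp_all
  next
    fix y assume y: "y \<in> Y"
    show "AB_path V E A B (glue (fp y) (rev (fq y)))"
    proof (rule AB_path_glue[OF paths[OF y]])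
      show "last (fp y) = last (fq y)" using fp[OF y] fq[OF y] by simp
      show "set (butlast (fp y)) \<inter> set (butlast (fq y)) = {}" "set (butlast (fq y)) \<inter> A = {}"
        "set (butlast (fp y)) \<inter> B = {}"
        using RA RB fp[OF y] fq[OF y] disj by blast+
    qed
  next
    fix y z assume yz: "y \<in> Y" "z \<in> Y" "y \<noteq> z"
    then have "fp y \<noteq> fp z" "fq y \<noteq> fq z" using fp fq by metis+
    then have "set (fp y) \<inter> set (fp z) = {}" "set (fq y) \<inter> set (fq z) = {}"
      using fp[OF yz(1)] fp[OF yz(2)] fq[OF yz(1)] fq[OF yz(2)] P Q
      unfolding linkage_def pairwise_def by blast+
    moreover have "y \<notin> set (fq z)" "z \<notin> set (fq y)" "y \<notin> set (fp z)" "z \<notin> set (fp y)"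
      using yz fp fq AB_path_last[OF paths(1)] AB_path_last[OF paths(2)] by metis+
    then have "set (fp y) \<inter> set (fq z) = {}" "set (fq y) \<inter> set (fp z) = {}"
      using set_fp set_fq yz disj by blast+
    moreover have "set (glue (fp x) (rev (fq x))) = set (fp x) \<union> set (fq x)" if "x \<in> Y" for x
      using AB_path_nonempty[OF paths(1)[OF that]] AB_path_nonempty[OF paths(2)[OF that]]
        fp[OF that] fq[OF that] by (simp add: hd_rev)
    ultimately show "set (glue (fp y) (rev (fq y))) \<inter> set (glue (fp z) (rev (fq z))) = {}"
      using yz by blast
  qed
  then show ?thesis by blast
qed

text \<open>
  The induction step follows Diestel's first proof: if deleting the edge \<open>e = {a, b}\<close> leaves an
  \<open>A\<close>-\<open>B\<close> separator \<open>S\<close> with fewer than \<open>k\<close> vertices, then \<open>S \<union> {a}\<close> and \<open>S \<union> {b}\<close> are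
  separators of size \<open>k\<close>, and linkages from \<open>A\<close> to \<open>S \<union> {a}\<close> and from \<open>B\<close> to \<open>S \<union> {b}\<close>
  avoiding \<open>e\<close> are glued across \<open>e\<close>.
\<close>

lemma small_separator_sides:
  assumes G: "graph V E" and e: "e \<in> E"
    and sep: "\<forall>T\<subseteq>V. separates V E A B T \<longrightarrow> k \<le> card T"
    and S: "S \<subseteq> V" "separates V (E - {e}) A B S" "card S < k"
  obtains a b where "e = {a, b}" "a \<notin> S" "b \<notin> S" "card (insert b S) = k"
    "a \<in> reach_avoiding V (E - {e}) S A" "b \<in> reach_avoiding V (E - {e}) S B"
    "\<forall>Z\<subseteq>V. separates V (E - {e}) A (insert a S) Z \<longrightarrow> k \<le> card Z"
    "\<forall>Z\<subseteq>V. separates V (E - {e}) B (insert b S) Z \<longrightarrow> k \<le> card Z"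
proof -
  have "\<not> separates V E A B S" using sep S(1,3) by (meson leD)
  then obtain a b where ab: "e = {a, b}" "a \<in> reach_avoiding V (E - {e}) S A"
      "b \<in> reach_avoiding V (E - {e}) S B"
    by (rule separator_edge_sides[OF G e S(2)])
  have E': "E - {e} = E - {{a, b}}" "E - {e} = E - {{b, a}}" using ab(1) by (auto simp: insert_commute)
  have "a \<notin> S" "b \<notin> S"
    using ab(2,3) reach_avoiding_disjoint_separator[of S V "E - {e}"] by blast+
  moreover have V: "a \<in> V" "b \<in> V" using graph_edge_subset[OF G e] ab(1) by auto
  moreover have sep_a: "separates V E A B (insert a S)" and sep_b: "separates V E A B (insert b S)"
    using separates_insert_endpoint[OF S(2)] ab(1) by simp_all
  moreover have "finite S" using G finite_subset[OF S(1)] by (simp add: graph_def)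
  ultimately have "card (insert b S) = k"
    using sep S(1,3) by (metis Suc_leI card_insert_disjoint insert_subset le_antisym)
  moreover have "\<forall>Z\<subseteq>V. separates V (E - {e}) A (insert a S) Z \<longrightarrow> k \<le> card Z"
    using separates_through_endpoint[OF S(2)[unfolded E'(1)] sep_a ab(3)[unfolded E'(1)]] sep
    unfolding E'(1) by blast
  moreover have "\<forall>Z\<subseteq>V. separates V (E - {e}) B (insert b S) Z \<longrightarrow> k \<le> card Z"
    using separates_through_endpoint[OF separates_sym[THEN iffD1, OF S(2)[unfolded E'(2)]]
      separates_sym[THEN iffD1, OF sep_b] ab(2)[unfolded E'(2)]] sep separates_sym[of V E B A]
    unfolding E'(2) by blast
  ultimately show ?thesis using that ab \<open>a \<notin> S\<close> \<open>b \<notin> S\<close> by blast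
qed

lemma menger_step:
  assumes G: "graph V E" and e: "e \<in> E"
    and sep: "\<forall>T\<subseteq>V. separates V E A B T \<longrightarrow> k \<le> card T"
    and S: "S \<subseteq> V" "separates V (E - {e}) A B S" "card S < k"
    and IH: "\<And>A B. \<forall>T\<subseteq>V. separates V (E - {e}) A B T \<longrightarrow> k \<le> card T \<Longrightarrow>
      \<exists>P. linkage V (E - {e}) A B k P"
  shows "\<exists>P. linkage V E A B k P"
proof -
  obtain a b where ab: "e = {a, b}" "a \<notin> S" "b \<notin> S" "card (insert b S) = k"
      "a \<in> reach_avoiding V (E - {e}) S A" "b \<in> reach_avoiding V (E - {e}) S B"
    and sides: "\<forall>Z\<subseteq>V. separates V (E - {e}) A (insert a S) Z \<longrightarrow> k \<le> card Z"
      "\<forall>Z\<subseteq>V. separates V (E - {e}) B (insert b S) Z \<longrightarrow> k \<le> card Z"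
    by (rule small_separator_sides[OF G e sep S])
  define RA where "RA = reach_avoiding V (E - {e}) S A"
  define RB where "RB = reach_avoiding V (E - {e}) S B"
  have sep_BA: "separates V (E - {e}) B A S" using S(2) separates_sym by blast
  have disj: "RA \<inter> RB = {}" "A \<inter> RB = {}" "B \<inter> RA = {}"
    unfolding RA_def RB_def
    by (fact reach_avoiding_disjoint[OF S(2)] reach_avoiding_disjoint_target[OF S(2)]
      reach_avoiding_disjoint_target[OF sep_BA])+
  obtain P where P: "linkage V (E - {e}) A (insert a S) k P" using IH[OF sides(1)] by blast
  obtain Q where Q: "linkage V (E - {e}) B (insert b S) k Q" using IH[OF sides(2)] by blast
  have "\<forall>p\<in>P. set (butlast p) \<subseteq> RA" "\<forall>q\<in>Q. set (butlast q) \<subseteq> RB"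
    using linkage_butlast_reach_avoiding[OF P] linkage_butlast_reach_avoiding[OF Q]
    unfolding RA_def RB_def by blast+
  moreover have "b \<in> V" "{a, b} \<in> E" using graph_edge_subset[OF G e] e ab(1) by auto
  moreover have "a \<in> RA" "b \<notin> RA" "b \<notin> A"
    using ab(5,6) disj unfolding RA_def RB_def by blast+
  ultimately obtain P' where P': "linkage V E A (insert b S) k P'" "\<forall>p\<in>P'. set (butlast p) \<subseteq> RA"
    using linkage_extend_edge[OF linkage_mono[OF P Diff_subset]] ab(2,3) by blast
  have "finite S" using G finite_subset[OF S(1)] by (simp add: graph_def)
  then show ?thesis
    using linkage_glue[OF P'(1) linkage_mono[OF Q Diff_subset] _ ab(4) P'(2)] disj
      \<open>\<forall>q\<in>Q. set (butlast q) \<subseteq> RB\<close> by blast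
qed

theorem menger:
  assumes "graph V E" "\<forall>S\<subseteq>V. separates V E A B S \<longrightarrow> k \<le> card S"
  shows "\<exists>P. linkage V E A B k P"
proof -
  have "E \<subseteq> Pow V" using graph_edge_subset[OF assms(1)] by blast
  then have "finite E" using assms(1) by (simp add: graph_def finite_subset)
  then show ?thesis using assms
  proof (induction E arbitrary: A B rule: finite_psubset_induct)
    case (psubset E)
    show ?case
    proof (cases "E = {}")
      case True
      with psubset.prems show ?thesis by (simp add: menger_no_edges graph_def)
    next
      case False
      then obtain e where e: "e \<in> E" by blast
      have "graph V (E - {e})" using psubset.prems(1) unfolding graph_def by auto
      then have IH: "\<And>A B. \<forall>T\<subseteq>V. separates V (E - {e}) A B T \<longrightarrow> k \<le> card T \<Longrightarrow>
          \<exists>P. linkage V (E - {e}) A B k P"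
        using psubset.IH[of "E - {e}"] e by blast
      show ?thesis
      proof (cases "\<forall>T\<subseteq>V. separates V (E - {e}) A B T \<longrightarrow> k \<le> card T")
        case True
        then obtain P where "linkage V (E - {e}) A B k P" using IH by blast
        then show ?thesis using linkage_mono by blast
      next
        case False
        then obtain S where "S \<subseteq> V" "separates V (E - {e}) A B S" "card S < k"
          by (auto simp: not_le)
        from menger_step[OF psubset.prems(1) e psubset.prems(2) this IH] show ?thesis .
      qed
    qed
  qed
qed

lemma three_connected_linkage:
  assumes G: "graph V E" and T: "three_connected V E"
    and A: "A \<subseteq> V" "3 \<le> card A" and B: "B \<subseteq> V" "3 \<le> card B"
  shows "\<exists>P. linkage V E A B 3 P"
proof (rule menger[OF G], intro allI impI)
  fix S assume S: "S \<subseteq> V" "separates V E A B S"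
  show "3 \<le> card S"
  proof (rule ccontr)
    assume small: "\<not> 3 \<le> card S"
    then have conn: "connected_on V E (V - S)" using T S(1) unfolding three_connected_def by auto
    have "finite S" using G finite_subset[OF S(1)] by (simp add: graph_def)
    then have "\<not> A \<subseteq> S" "\<not> B \<subseteq> S" using small A(2) B(2) card_mono by (metis order.trans)+
    then obtain a b where ab: "a \<in> A - S" "b \<in> B - S" by blast
    then obtain p where p: "is_path V E p" "set p \<subseteq> V - S" "hd p = a" "last p = b"
      using conn A(1) B(1) unfolding connected_on_def by blast
    then have "walk V E p" "set p \<inter> S = {}" by (auto simp: is_path_iff_walk)
    with p(3,4) ab S(2) show False unfolding separates_def by blast
  qed
qed

section \<open>Paths along a cycle\<close>

lemma cycle_segment:
  assumes C: "is_cycle V E c" and ij: "i < j" "j < length c"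
  defines "R \<equiv> drop i (take (Suc j) c)"
  shows "is_path V E R" "hd R = c ! i" "last R = c ! j" "path_len R = j - i"
proof -
  have c: "walk V E c" "distinct c" using C unfolding is_cycle_def is_path_iff_walk by auto
  have "walk V E (take (Suc j) c)" by (rule walk_take_drop(1)[OF c(1)]) simp
  then have "walk V E R" unfolding R_def using ij by (intro walk_take_drop(2)) auto
  moreover have "distinct R" unfolding R_def using c(2) by simp
  ultimately show "is_path V E R" by (simp add: is_path_iff_walk)
  show "hd R = c ! i" "last R = c ! j" "path_len R = j - i"
    using ij by (auto simp: R_def hd_drop_conv_nth take_Suc_conv_app_nth path_len_def)
qed

lemma cycle_complement_segment:
  assumes C: "is_cycle V E c" and ij: "i < j" "j < length c"
  defines "R \<equiv> rev (drop j c @ take (Suc i) c)"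
  shows "is_path V E R" "hd R = c ! i" "last R = c ! j" "path_len R = length c - j + i"
proof -
  have c: "walk V E c" "distinct c" "{last c, hd c} \<in> E"
    using C unfolding is_cycle_def is_path_iff_walk by auto
  have "walk V E (drop j c @ take (Suc i) c)"
    using ij c by (intro walk_append walk_take_drop) (auto simp: hd_conv_nth)
  moreover have "distinct (drop j c @ take (Suc i) c)"
    using c(2) ij set_take_disj_set_drop_if_distinct[of c "Suc i" j] by auto
  ultimately have "is_path V E (drop j c @ take (Suc i) c)" by (simp add: is_path_iff_walk)
  then show "is_path V E R" unfolding R_def by (simp only: is_path_rev)
  show "hd R = c ! i" "last R = c ! j" "path_len R = length c - j + i"
    using ij by (auto simp: R_def hd_rev last_rev hd_drop_conv_nth take_Suc_conv_app_nth path_len_def)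
qed

lemma segment_inter_complement:
  assumes c: "distinct c" and ij: "i < j" "j < length c"
  shows "set (drop i (take (Suc j) c)) \<inter> set (drop j c @ take (Suc i) c) = {c ! i, c ! j}"
proof -
  have "drop i (take j c) = take j c ! i # drop (Suc i) (take j c)"
    using Cons_nth_drop_Suc[of i "take j c"] ij by simp
  then have "drop i (take (Suc j) c) = c ! i # drop (Suc i) (take j c) @ [c ! j]"
    using ij by (simp add: take_Suc_conv_app_nth)
  moreover have "set (drop (Suc i) (take j c)) \<subseteq> set (take j c) \<inter> set (drop (Suc i) c)"
    using set_drop_subset[of "Suc i" "take j c"] set_take_subset[of "j - Suc i" "drop (Suc i) c"]
    by (simp add: drop_take)
  moreover have "set (take j c) \<inter> set (drop j c) = {}" "set (take (Suc i) c) \<inter> set (drop (Suc i) c) = {}"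
    using c by (simp_all add: set_take_disj_set_drop_if_distinct)
  moreover have "c ! i \<in> set (take (Suc i) c)" using ij by (simp add: take_Suc_conv_app_nth)
  moreover have "c ! j \<in> set (drop j c)" using ij by (metis Cons_nth_drop_Suc list.set_intros(1))
  ultimately show ?thesis by auto
qed

lemma cycle_two_arcs:
  assumes C: "is_cycle V E c" and ij: "i < j" "j < length c"
  obtains R1 R2 where "is_path V E R1" "hd R1 = c ! i" "last R1 = c ! j"
    "is_path V E R2" "hd R2 = c ! i" "last R2 = c ! j"
    "path_len R1 = j - i" "path_len R1 + path_len R2 = length c"
    "set R1 \<subseteq> set c" "set R2 \<subseteq> set c" "set R1 \<inter> set R2 = {c ! i, c ! j}"
proof -
  have "distinct c" using C by (simp add: is_cycle_def is_path_def)
  then have "set (drop i (take (Suc j) c)) \<inter> set (rev (drop j c @ take (Suc i) c)) = {c ! i, c ! j}"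
    using segment_inter_complement[OF _ ij] by (simp add: Un_commute)
  moreover have "set (drop i (take (Suc j) c)) \<subseteq> set c" "set (rev (drop j c @ take (Suc i) c)) \<subseteq> set c"
    by (auto dest: in_set_dropD in_set_takeD)
  ultimately show ?thesis
    using that cycle_segment[OF C ij] cycle_complement_segment[OF C ij] ij by simp
qed

lemma path_len_rev [simp]: "path_len (rev p) = path_len p"
  by (simp add: path_len_def)

lemma cycle_two_paths:
  assumes C: "is_cycle V E c" and xy: "x \<in> set c" "y \<in> set c" "x \<noteq> y"
  obtains R1 R2 where "is_path V E R1" "hd R1 = x" "last R1 = y" "is_path V E R2" "hd R2 = x"
    "last R2 = y" "path_len R1 + path_len R2 = length c" "set R1 \<subseteq> set c" "set R2 \<subseteq> set c"
proof -
  obtain i j where ij: "i < length c" "j < length c" "c ! i = x" "c ! j = y"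
    using xy by (metis in_set_conv_nth)
  with xy(3) consider "i < j" | "j < i" by (metis linorder_neqE_nat)
  then show ?thesis
  proof cases
    case 1
    with C ij show ?thesis by (metis that cycle_two_arcs)
  next
    case 2
    obtain R1 R2 where "is_path V E R1" "hd R1 = y" "last R1 = x" "is_path V E R2" "hd R2 = y"
      "last R2 = x" "path_len R1 + path_len R2 = length c" "set R1 \<subseteq> set c" "set R2 \<subseteq> set c"
      using cycle_two_arcs[OF C 2 ij(1)] ij by metis
    moreover from this have "R1 \<noteq> []" "R2 \<noteq> []" by (auto simp: is_path_def)
    ultimately show ?thesis
      using that[of "rev R1" "rev R2"] by (simp add: hd_rev last_rev)
  qed
qed

lemma odd_cycle_path_parity:
  assumes "is_cycle V E c" "odd (length c)" "x \<in> set c" "y \<in> set c" "x \<noteq> y"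
  obtains T where "is_path V E T" "hd T = x" "last T = y" "set T \<subseteq> set c" "even (path_len T) = b"
proof -
  obtain R1 R2 where R: "is_path V E R1" "hd R1 = x" "last R1 = y" "is_path V E R2" "hd R2 = x"
    "last R2 = y" "path_len R1 + path_len R2 = length c" "set R1 \<subseteq> set c" "set R2 \<subseteq> set c"
    using cycle_two_paths[OF assms(1,3-5)] by metis
  have "odd (path_len R1 + path_len R2)" using R(7) assms(2) by simp
  then have "even (path_len R1) \<noteq> even (path_len R2)" by simp
  then show ?thesis using that R by (cases "even (path_len R1) = b") auto
qed

section \<open>Bisubdivisions of K_{2,3}\<close>

lemma even_path_split:
  assumes r: "is_path V E r" "hd r = u" "last r = w" "u \<noteq> w" "even (path_len r)"
  shows "is_path V E [u, r ! 1]" "is_path V E (drop 1 r)" "hd (drop 1 r) = r ! 1" "last (drop 1 r) = w"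
    "odd (path_len (drop 1 r))" "r ! 1 \<in> set r - {u, w}" "internal (drop 1 r) \<subseteq> set r - {u, w, r ! 1}"
proof -
  obtain x xs where "r = x # xs" using r(1) by (cases r) (auto simp: is_path_def)
  with r(2-4) obtain m rest where mr: "r = u # m # rest" by (cases xs) auto
  with r(5) have "rest \<noteq> []" by (auto simp: path_len_def)
  with mr r(3) have w: "last rest = w" by simp
  have "walk V E r" "distinct r" using r(1) by (simp_all add: is_path_iff_walk)
  then have "walk V E (take 2 r)" "walk V E (drop 1 r)"
    using walk_take_drop(1)[of V E r 2] walk_take_drop(2)[of V E r 1] mr by simp_all
  with \<open>distinct r\<close> show "is_path V E [u, r ! 1]" "is_path V E (drop 1 r)"
    using mr by (simp_all add: is_path_iff_walk)
  show "hd (drop 1 r) = r ! 1" "last (drop 1 r) = w" "odd (path_len (drop 1 r))"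
    using mr w r(5) \<open>rest \<noteq> []\<close> by (auto simp: path_len_def)
  have "w \<in> set rest" "w \<notin> set (butlast rest)"
    using w \<open>rest \<noteq> []\<close> \<open>distinct r\<close> mr distinct_last_notin_butlast[of rest] by auto
  with \<open>distinct r\<close> show "r ! 1 \<in> set r - {u, w}" "internal (drop 1 r) \<subseteq> set r - {u, w, r ! 1}"
    using mr by (auto simp: internal_def dest: in_set_butlastD)
qed

lemma K23_E_cases:
  assumes "e \<in> K23_E"
  obtains j where "j \<in> {2, 3, 4}" "e = {0, j} \<or> e = {1, j}" "Max e = j"
proof -
  obtain i j where e: "e = {i, j}" "i \<in> {0, 1}" "j \<in> {2, 3, 4}"
    using assms unfolding K23_E_def by blast
  moreover from this have "Max e = j" by (auto simp: max_def)
  ultimately show ?thesis using that by blast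
qed

text \<open>An edge of K_{2,3} is \<open>{i, j}\<close> with \<open>i \<in> {0, 1}\<close> and \<open>j \<in> {2, 3, 4}\<close>, so \<open>Max e\<close> recovers \<open>j\<close>.\<close>

definition K23_vertex_map :: "'a \<Rightarrow> 'a \<Rightarrow> (nat \<Rightarrow> 'a) \<Rightarrow> nat \<Rightarrow> 'a" where
  "K23_vertex_map u w m n = (if n = 0 then u else if n = 1 then w else m n)"

definition K23_edge_path :: "'a \<Rightarrow> (nat \<Rightarrow> 'a) \<Rightarrow> (nat \<Rightarrow> 'a list) \<Rightarrow> nat set \<Rightarrow> 'a list" where
  "K23_edge_path u m B e = (if 0 \<in> e then [u, m (Max e)] else B (Max e))"

lemma K23_vertex_map_image: "K23_vertex_map u w m ` K23_V = {u, w} \<union> m ` {2, 3, 4}"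
  unfolding K23_V_def K23_vertex_map_def by auto

lemma K23_edge_path_bisubdivides:
  assumes e: "e \<in> K23_E"
    and edge: "\<And>j. j \<in> {2, 3, 4} \<Longrightarrow> is_path V E [u, m j]"
    and branch: "\<And>j. j \<in> {2, 3, 4} \<Longrightarrow>
      is_path V E (B j) \<and> hd (B j) = m j \<and> last (B j) = w \<and> odd (path_len (B j))"
    and avoid: "\<And>j. j \<in> {2, 3, 4} \<Longrightarrow> internal (B j) \<inter> ({u, w} \<union> m ` {2, 3, 4}) = {}"
  defines "P \<equiv> K23_edge_path u m B e" and "f \<equiv> K23_vertex_map u w m"
  shows "is_path V E P \<and> {hd P, last P} = f ` e \<and> odd (path_len P) \<and> internal P \<inter> f ` K23_V = {}"
proof -
  obtain j where j: "j \<in> {2, 3, 4}" "e = {0, j} \<or> e = {1, j}" "Max e = j"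
    by (rule K23_E_cases[OF e])
  then have j01: "j \<noteq> 0" "j \<noteq> 1" by auto
  then have f: "f 0 = u" "f 1 = w" "f j = m j" by (simp_all add: f_def K23_vertex_map_def)
  have P: "P = (if 0 \<in> e then [u, m j] else B j)" unfolding P_def K23_edge_path_def j(3) ..
  from j(2) show ?thesis
  proof
    assume e0: "e = {0, j}"
    then have "P = [u, m j]" unfolding P by simp
    with e0 show ?thesis using edge[OF j(1)] f by (simp add: path_len_def internal_def)
  next
    assume e1: "e = {1, j}"
    then have "P = B j" unfolding P using j01 by simp
    moreover have "{m j, w} = {w, m j}" by blast
    ultimately show ?thesis
      using e1 branch[OF j(1)] avoid[OF j(1)] f K23_vertex_map_image[of u w m] by (simp add: f_def)
  qed
qed

lemma K23_edge_path_internal_disjoint: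
  assumes "e \<in> K23_E" "e' \<in> K23_E" "e \<noteq> e'"
    and disj: "\<And>j k. j \<in> {2, 3, 4} \<Longrightarrow> k \<in> {2, 3, 4} \<Longrightarrow> j \<noteq> k \<Longrightarrow>
      internal (B j) \<inter> internal (B k) = {}"
  shows "internal (K23_edge_path u m B e) \<inter> internal (K23_edge_path u m B e') = {}"
proof (cases "0 \<in> e \<or> 0 \<in> e'")
  case True
  then show ?thesis by (auto simp: K23_edge_path_def internal_def)
next
  case False
  from assms(1,2) obtain j j' where jj: "j \<in> {2, 3, 4}" "e = {0, j} \<or> e = {1, j}" "Max e = j"
      "j' \<in> {2, 3, 4}" "e' = {0, j'} \<or> e' = {1, j'}" "Max e' = j'"
    by (metis K23_E_cases)
  with False have "e = {1, j}" "e' = {1, j'}" by auto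
  with assms(3) have "j \<noteq> j'" by blast
  with False jj show ?thesis using disj[OF jj(1,4)] by (simp add: K23_edge_path_def)
qed

lemma K23_based_if_branches:
  fixes m :: "nat \<Rightarrow> 'a" and B :: "nat \<Rightarrow> 'a list"
  assumes dist: "distinct [u, w, m 2, m 3, m 4]"
    and edge: "\<And>j. j \<in> {2, 3, 4} \<Longrightarrow> is_path V E [u, m j]"
    and branch: "\<And>j. j \<in> {2, 3, 4} \<Longrightarrow>
      is_path V E (B j) \<and> hd (B j) = m j \<and> last (B j) = w \<and> odd (path_len (B j))"
    and avoid: "\<And>j. j \<in> {2, 3, 4} \<Longrightarrow> internal (B j) \<inter> ({u, w} \<union> m ` {2, 3, 4}) = {}"
    and disj: "\<And>j k. j \<in> {2, 3, 4} \<Longrightarrow> k \<in> {2, 3, 4} \<Longrightarrow> j \<noteq> k \<Longrightarrow>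
      internal (B j) \<inter> internal (B k) = {}"
  shows "K23_based V E"
proof -
  let ?f = "K23_vertex_map u w m"
  have "map ?f [0, 1, 2, 3, 4] = [u, w, m 2, m 3, m 4]" by (simp add: K23_vertex_map_def)
  with dist have inj: "inj_on ?f K23_V" by (metis K23_V_def distinct_map list.set(1,2))
  have "set [u, m j] \<subseteq> V" "set (B j) \<subseteq> V" "B j \<noteq> []" if "j \<in> {2, 3, 4}" for j
    using edge[OF that] branch[OF that] by (auto simp: is_path_def)
  then have "?f ` K23_V \<subseteq> V"
    unfolding K23_vertex_map_image using branch[of 2] by (force dest: last_in_set)
  with inj show ?thesis
    unfolding K23_based_def contains_bisubdivision_def
    using K23_edge_path_bisubdivides[OF _ edge branch avoid] K23_edge_path_internal_disjoint[OF _ _ _ disj]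
    by (intro exI[of _ ?f] exI[of _ "K23_edge_path u m B"] conjI ballI impI) auto
qed

lemma K23_based_if_even_theta:
  fixes R :: "nat \<Rightarrow> 'a list"
  assumes uw: "u \<noteq> w"
    and R: "\<And>j. j \<in> {2, 3, 4} \<Longrightarrow>
      is_path V E (R j) \<and> hd (R j) = u \<and> last (R j) = w \<and> even (path_len (R j))"
    and disj: "\<And>i j. i \<in> {2, 3, 4} \<Longrightarrow> j \<in> {2, 3, 4} \<Longrightarrow> i \<noteq> j \<Longrightarrow> set (R i) \<inter> set (R j) \<subseteq> {u, w}"
  shows "K23_based V E"
proof -
  have arms: "is_path V E [u, R j ! 1]" "is_path V E (drop 1 (R j))" "hd (drop 1 (R j)) = R j ! 1"
    "last (drop 1 (R j)) = w" "odd (path_len (drop 1 (R j)))" "R j ! 1 \<in> set (R j) - {u, w}"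
    "internal (drop 1 (R j)) \<subseteq> set (R j) - {u, w, R j ! 1}" if "j \<in> {2, 3, 4}" for j
  proof -
    from R[OF that] have r: "is_path V E (R j)" "hd (R j) = u" "last (R j) = w" "even (path_len (R j))"
      by blast+
    show "is_path V E [u, R j ! 1]" "is_path V E (drop 1 (R j))" "hd (drop 1 (R j)) = R j ! 1"
      "last (drop 1 (R j)) = w" "odd (path_len (drop 1 (R j)))" "R j ! 1 \<in> set (R j) - {u, w}"
      "internal (drop 1 (R j)) \<subseteq> set (R j) - {u, w, R j ! 1}"
      by (fact even_path_split[OF r(1-3) uw r(4)])+
  qed
  have other: "R k ! 1 \<notin> set (R j) - {u, w}" if "j \<in> {2, 3, 4}" "k \<in> {2, 3, 4}" "k \<noteq> j" for j k
    using arms(6)[OF that(2)] disj[OF that(2,1,3)] by blast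
  show ?thesis
  proof (rule K23_based_if_branches[where m = "\<lambda>j. R j ! 1" and B = "\<lambda>j. drop 1 (R j)"])
    show "distinct [u, w, R 2 ! 1, R 3 ! 1, R 4 ! 1]"
      using uw arms(6)[of 2] arms(6)[of 3] arms(6)[of 4] other[of 2 3] other[of 2 4] other[of 3 4]
      by auto
  next
    fix j :: nat assume j: "j \<in> {2, 3, 4}"
    show "is_path V E [u, R j ! 1]" using arms(1)[OF j] .
    show "is_path V E (drop 1 (R j)) \<and> hd (drop 1 (R j)) = R j ! 1 \<and> last (drop 1 (R j)) = w \<and>
        odd (path_len (drop 1 (R j)))"
      using arms(2-5)[OF j] by blast
    have "R k ! 1 \<notin> set (R j) - {u, w, R j ! 1}" if "k \<in> {2, 3, 4}" for k
      using other[OF j that] by (cases "k = j") auto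
    then show "internal (drop 1 (R j)) \<inter> ({u, w} \<union> (\<lambda>j. R j ! 1) ` {2, 3, 4}) = {}"
      using arms(7)[OF j] by blast
  next
    fix j k :: nat assume jk: "j \<in> {2, 3, 4}" "k \<in> {2, 3, 4}" "j \<noteq> k"
    show "internal (drop 1 (R j)) \<inter> internal (drop 1 (R k)) = {}"
      using arms(7)[OF jk(1)] arms(7)[OF jk(2)] disj[OF jk] by blast
  qed
qed

section \<open>Mixed bicycles\<close>

lemma card3_even_gap:
  fixes J :: "nat set"
  assumes "card J = 3"
  obtains i j where "i \<in> J" "j \<in> J" "i < j" "even (j - i)"
proof -
  obtain x y z where J: "J = {x, y, z}" "x \<noteq> y" "y \<noteq> z" "x \<noteq> z"
    using assms card_3_iff by metis
  have gap: "\<exists>i\<in>J. \<exists>j\<in>J. i < j \<and> even (j - i)" if "u \<in> J" "v \<in> J" "u < v" "even (u + v)" for u v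
  proof -
    have "even (v - u)" using that(3,4) by (simp add: add.commute)
    with that show ?thesis by blast
  qed
  have "even (x + y) \<or> even (x + z) \<or> even (y + z)" by presburger
  moreover have "x < y \<or> y < x" "x < z \<or> z < x" "y < z \<or> z < y" using J(2-4) by auto
  ultimately show ?thesis using gap[of x y] gap[of y x] gap[of x z] gap[of z x] gap[of y z] gap[of z y]
    J(1) that by (auto simp: add.commute)
qed

lemma linkage_ends_even_gap:
  assumes L: "linkage V E A (set c) 3 P" and c: "distinct c"
  obtains p q i j where "p \<in> P" "q \<in> P" "p \<noteq> q" "i < j" "j < length c" "even (j - i)"
    "last p = c ! i" "last q = c ! j"
proof -
  define J where "J = {j. j < length c \<and> c ! j \<in> last ` P}"
  have ends: "last ` P \<subseteq> set c" using L unfolding linkage_def AB_path_def by auto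
  have "(!) c ` J = last ` P"
  proof
    show "(!) c ` J \<subseteq> last ` P" unfolding J_def by auto
    show "last ` P \<subseteq> (!) c ` J"
    proof
      fix v assume v: "v \<in> last ` P"
      then obtain j where "j < length c" "v = c ! j" using ends by (metis in_set_conv_nth subsetD)
      with v show "v \<in> (!) c ` J" unfolding J_def by auto
    qed
  qed
  moreover have "inj_on ((!) c) J" using c unfolding J_def inj_on_def by (simp add: nth_eq_iff_index_eq)
  ultimately have "card J = 3"
    using card_image linkage_inj_last[OF L] L unfolding linkage_def by metis
  then obtain i j where ij: "i \<in> J" "j \<in> J" "i < j" "even (j - i)" by (rule card3_even_gap)
  then obtain p q where pq: "p \<in> P" "q \<in> P" "last p = c ! i" "last q = c ! j"
    unfolding J_def by auto
  moreover have "c ! i \<noteq> c ! j" using ij c unfolding J_def by (simp add: nth_eq_iff_index_eq)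
  then have "p \<noteq> q" using pq by metis
  ultimately show ?thesis using ij that unfolding J_def by blast
qed

lemma AB_path_pair_join:
  assumes p: "AB_path V E A B p" and q: "AB_path V E A B q" and pq: "set p \<inter> set q = {}"
    and T: "is_path V E T" "hd T = hd p" "last T = hd q" "set T \<subseteq> A" and AB: "A \<inter> B = {}"
  defines "J \<equiv> glue (glue (rev p) T) q"
  shows "is_path V E J" "hd J = last p" "last J = last q"
    "path_len J = path_len p + path_len T + path_len q" "set J \<inter> B = {last p, last q}"
proof -
  have ne: "p \<noteq> []" "q \<noteq> []" "T \<noteq> []"
    using AB_path_nonempty[OF p] AB_path_nonempty[OF q] T(1) by (auto simp: is_path_def)
  have pA: "set p \<inter> A = {hd p}" and qA: "set q \<inter> A = {hd q}"
    and pB: "set p \<inter> B = {last p}" and qB: "set q \<inter> B = {last q}"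
    using p q unfolding AB_path_def by blast+
  have j1: "last (rev p) = hd T" "rev p \<noteq> []" using ne T(2) by (simp_all add: last_rev)
  have "is_path V E (rev p)" "is_path V E q" using p q by (simp_all add: AB_path_def)
  have "set (rev p) \<inter> set T \<subseteq> {hd T}" using pA T(2,4) by auto
  with \<open>is_path V E (rev p)\<close> T(1) j1(1) have "is_path V E (glue (rev p) T)"
    by (rule is_path_glue)
  moreover have j2: "last (glue (rev p) T) = hd q" "glue (rev p) T \<noteq> []" "set (glue (rev p) T) = set p \<union> set T"
    using j1 ne T(3) by simp_all
  moreover have "set (glue (rev p) T) \<inter> set q \<subseteq> {hd q}" using j2(3) pq T(4) qA by blast
  ultimately show "is_path V E J"
    unfolding J_def using is_path_glue \<open>is_path V E q\<close> by blast
  show "hd J = last p" "last J = last q" "path_len J = path_len p + path_len T + path_len q"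
    using j1 j2 ne unfolding J_def by (simp_all add: hd_rev)
  have "set J = set p \<union> set T \<union> set q" using j2 ne unfolding J_def by simp
  then show "set J \<inter> B = {last p, last q}" using pB qB T(4) AB by blast
qed

lemma K23_based_if_linked_bicycle:
  assumes bic: "mixed_bicycle V E Qo Qe"
    and p: "AB_path V E (set Qo) (set Qe) p" and q: "AB_path V E (set Qo) (set Qe) q"
    and pq: "set p \<inter> set q = {}"
    and ij: "i < j" "j < length Qe" "even (j - i)" "last p = Qe ! i" "last q = Qe ! j"
  shows "K23_based V E"
proof -
  have Qo: "is_cycle V E Qo" "odd (length Qo)" and Qe: "is_cycle V E Qe" "even (length Qe)"
    and QoQe: "set Qo \<inter> set Qe = {}"
    using bic unfolding mixed_bicycle_def by auto
  define u where "u = Qe ! i"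
  define w where "w = Qe ! j"
  have "distinct Qe" using Qe(1) by (simp add: is_cycle_def is_path_def)
  then have uw: "u \<noteq> w" using ij(1,2) unfolding u_def w_def by (simp add: nth_eq_iff_index_eq)
  obtain R2 R3 where R23: "is_path V E R2" "hd R2 = u" "last R2 = w" "is_path V E R3" "hd R3 = u"
    "last R3 = w" "path_len R2 = j - i" "path_len R2 + path_len R3 = length Qe"
    "set R2 \<subseteq> set Qe" "set R3 \<subseteq> set Qe" "set R2 \<inter> set R3 = {u, w}"
    using cycle_two_arcs[OF Qe(1) ij(1,2)] unfolding u_def w_def by metis
  have "even (path_len R2)" "even (path_len R3)"
    using R23(7,8) ij(3) Qe(2) by presburger+
  have "hd p \<in> set Qo" "hd q \<in> set Qo" "hd p \<noteq> hd q"
    using p q pq AB_path_nonempty unfolding AB_path_def by (auto dest: hd_in_set)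
  then obtain T where T: "is_path V E T" "hd T = hd p" "last T = hd q" "set T \<subseteq> set Qo"
    "even (path_len T) = even (path_len p + path_len q)"
    using odd_cycle_path_parity[OF Qo] by metis
  define R4 where "R4 = glue (glue (rev p) T) q"
  have R4: "is_path V E R4" "hd R4 = u" "last R4 = w" "even (path_len R4)" "set R4 \<inter> set Qe = {u, w}"
    using AB_path_pair_join[OF p q pq T(1-4) QoQe] T(5) ij(4,5)
    unfolding R4_def u_def w_def by auto
  define R where "R k = (if k = 2 then R2 else if k = 3 then R3 else R4)" for k :: nat
  show ?thesis
  proof (rule K23_based_if_even_theta[where R = R])
    show "u \<noteq> w" by (rule uw)
    show "is_path V E (R k) \<and> hd (R k) = u \<and> last (R k) = w \<and> even (path_len (R k))"
      if "k \<in> {2, 3, 4}" for k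
      using that R23 R4 \<open>even (path_len R2)\<close> \<open>even (path_len R3)\<close> unfolding R_def by auto
    show "set (R k) \<inter> set (R l) \<subseteq> {u, w}" if "k \<in> {2, 3, 4}" "l \<in> {2, 3, 4}" "k \<noteq> l" for k l
      using that R23(9-11) R4(5) unfolding R_def by auto
  qed
qed

theorem lemma3p3:
  fixes V :: "'a set" and E :: "'a set set"
  assumes "graph V E"
    and "three_connected V E"
    and "has_mixed_bicycle V E"
  shows "K23_based V E"
proof -
  obtain Qo Qe where bic: "mixed_bicycle V E Qo Qe"
    using assms(3) unfolding has_mixed_bicycle_def by blast
  then have "is_cycle V E Qo" "is_cycle V E Qe" unfolding mixed_bicycle_def by auto
  then have "set Qo \<subseteq> V" "3 \<le> card (set Qo)" "set Qe \<subseteq> V" "3 \<le> card (set Qe)" "distinct Qe"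
    by (auto simp: is_cycle_def is_path_def distinct_card)
  then obtain P where P: "linkage V E (set Qo) (set Qe) 3 P"
    using three_connected_linkage[OF assms(1,2)] by blast
  obtain p q i j where "p \<in> P" "q \<in> P" "p \<noteq> q" "i < j" "j < length Qe"
    "even (j - i)" "last p = Qe ! i" "last q = Qe ! j"
    by (rule linkage_ends_even_gap[OF P \<open>distinct Qe\<close>])
  with P bic show ?thesis
    unfolding linkage_def pairwise_def by (metis K23_based_if_linked_bicycle)
qed

end
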